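(* Let $n\ge 3$, $m\ge 2$, and $F,R$ be as in the context. Suppose that for integers $a_{ij}$ ($1\le i<j-1\le n-2$), $b_i,c_i$ ($1\le i\le n-2$), $d_i$ ($1\le i\le n-3$) the element $$w=\prod_{i<j-1}[s_i,s_j]^{a_{ij}}\cdot\prod_i[s_i,s_{i+1},s_i]^{b_i}\cdot\prod_i[s_i,s_{i+1},s_is_{i+1}^{-1}]^{c_i}\cdot\prod_i[[s_i,s_{i+1}],[s_{i+1},s_{i+2}]]^{d_i}$$ lies in $[R,F]$. Then $m\mid a_{ij}$ for all $i,j$, $m\mid b_i$ and $\gcd\!\big(m,\binom{m}{2}\big)\mid c_i$ for all $i$, and $\gcd(2,m)\mid d_i$ for all $i$.
   Context: Commutator conventions: $[a,b]=a^{-1}b^{-1}ab$, $a^b=b^{-1}ab$, and commutators are left-normed: $[a_1,\dots,a_k]=[[a_1,\dots,a_{k-1}],a_k]$. Let $F$ be the free group on $s_1,\dots,s_{n-1}$ and let $R$ be the normal closure in $F$ of the following relators: $s_i^m$ ($1\le i\le n-1$); $[s_i,s_j]$ ($1\le i<j-1\le n-2$); $[s_i,s_{i+1},s_i]$ and $[s_i,s_{i+1},s_{i+1}]$ ($1\le i\le n-2$); $[[s_i,s_{i+1}],[s_{i+1},s_{i+2}]]$ ($1\le i\le n-3$). It is known that $F/R\cong \mathrm{UT}_n(\mathbb Z/m\mathbb Z)$ via $s_i\mapsto I+E_{i,i+1}$. *)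

theory Defs
  imports "HOL-Algebra.Algebra"
begin

text \<open>A letter (i, False) stands for s_i, a letter (i, True) for s_i inverse.\<close>

definition inv_letter :: "nat \<times> bool \<Rightarrow> nat \<times> bool" where
  "inv_letter x = (fst x, \<not> snd x)"

fun reduced :: "(nat \<times> bool) list \<Rightarrow> bool" where
  "reduced [] = True"
| "reduced [x] = True"
| "reduced (x # y # ys) = (y \<noteq> inv_letter x \<and> reduced (y # ys))"

fun push_letter :: "nat \<times> bool \<Rightarrow> (nat \<times> bool) list \<Rightarrow> (nat \<times> bool) list" where
  "push_letter x [] = [x]"
| "push_letter x (y # ys) = (if y = inv_letter x then ys else x # y # ys)"

definition reduce :: "(nat \<times> bool) list \<Rightarrow> (nat \<times> bool) list" where
  "reduce ws = foldr push_letter ws []"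

definition free_group :: "nat \<Rightarrow> (nat \<times> bool) list monoid" where
  "free_group n = \<lparr> carrier = {ws. reduced ws \<and> set ws \<subseteq> {1..n-1} \<times> UNIV},
                    monoid.mult = (\<lambda>xs ys. reduce (xs @ ys)),
                    one = [] \<rparr>"

definition gen :: "nat \<Rightarrow> (nat \<times> bool) list" where
  "gen i = [(i, False)]"

text \<open>Commutator convention [a,b] = a^-1 b^-1 a b.\<close>
definition comm :: "('a, 'b) monoid_scheme \<Rightarrow> 'a \<Rightarrow> 'a \<Rightarrow> 'a" where
  "comm G a b = inv\<^bsub>G\<^esub> a \<otimes>\<^bsub>G\<^esub> inv\<^bsub>G\<^esub> b \<otimes>\<^bsub>G\<^esub> a \<otimes>\<^bsub>G\<^esub> b"

definition normal_closure :: "('a, 'b) monoid_scheme \<Rightarrow> 'a set \<Rightarrow> 'a set" where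
  "normal_closure G S =
     generate G (\<Union>g\<in>carrier G. (\<lambda>r. g \<otimes>\<^bsub>G\<^esub> r \<otimes>\<^bsub>G\<^esub> inv\<^bsub>G\<^esub> g) ` S)"

definition comm_subgroup :: "('a, 'b) monoid_scheme \<Rightarrow> 'a set \<Rightarrow> 'a set \<Rightarrow> 'a set" where
  "comm_subgroup G A B = generate G {comm G a b | a b. a \<in> A \<and> b \<in> B}"

definition list_prod :: "('a, 'b) monoid_scheme \<Rightarrow> 'a list \<Rightarrow> 'a" where
  "list_prod G xs = foldr (\<lambda>x y. x \<otimes>\<^bsub>G\<^esub> y) xs \<one>\<^bsub>G\<^esub>"

definition UT_relators :: "nat \<Rightarrow> nat \<Rightarrow> (nat \<times> bool) list set" where
  "UT_relators n m = (let F = free_group n; s = gen in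
      {s i [^]\<^bsub>F\<^esub> m | i. 1 \<le> i \<and> i \<le> n - 1}
    \<union> {comm F (s i) (s j) | i j. 1 \<le> i \<and> i < j - 1 \<and> j - 1 \<le> n - 2}
    \<union> {comm F (comm F (s i) (s (i+1))) (s i) | i. 1 \<le> i \<and> i \<le> n - 2}
    \<union> {comm F (comm F (s i) (s (i+1))) (s (i+1)) | i. 1 \<le> i \<and> i \<le> n - 2}
    \<union> {comm F (comm F (s i) (s (i+1))) (comm F (s (i+1)) (s (i+2))) | i. 1 \<le> i \<and> i \<le> n - 3})"

definition UT_R :: "nat \<Rightarrow> nat \<Rightarrow> (nat \<times> bool) list set" where
  "UT_R n m = normal_closure (free_group n) (UT_relators n m)"

definition w_elem :: "nat \<Rightarrow> (nat \<Rightarrow> nat \<Rightarrow> int) \<Rightarrow> (nat \<Rightarrow> int) \<Rightarrow> (nat \<Rightarrow> int)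
                      \<Rightarrow> (nat \<Rightarrow> int) \<Rightarrow> (nat \<times> bool) list" where
  "w_elem n a b c d = (let F = free_group n; s = gen in
      list_prod F [comm F (s i) (s j) [^]\<^bsub>F\<^esub> a i j. i \<leftarrow> [1..<n], j \<leftarrow> [i+2..<n]]
   \<otimes>\<^bsub>F\<^esub> list_prod F [comm F (comm F (s i) (s (i+1))) (s i) [^]\<^bsub>F\<^esub> b i. i \<leftarrow> [1..<n-1]]
   \<otimes>\<^bsub>F\<^esub> list_prod F [comm F (comm F (s i) (s (i+1)))
                        (s i \<otimes>\<^bsub>F\<^esub> inv\<^bsub>F\<^esub> (s (i+1))) [^]\<^bsub>F\<^esub> c i. i \<leftarrow> [1..<n-1]]
   \<otimes>\<^bsub>F\<^esub> list_prod F [comm F (comm F (s i) (s (i+1))) (comm F (s (i+1)) (s (i+2)))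
                        [^]\<^bsub>F\<^esub> d i. i \<leftarrow> [1..<n-2]])"

end

theory Submission
  imports Defs "HOL-Library.Product_Plus"
begin

text \<open>
  Every divisibility is detected by evaluating words in a concrete group \<open>G\<close> with integer
  coordinates. If a subgroup \<open>N \<le> G\<close> is normalised by the images of the generators and every
  relator evaluates to an element commuting with all of them modulo \<open>N\<close>, then the image of \<open>R\<close> is
  central modulo \<open>N\<close> in the image of \<open>F\<close>, so \<open>[R,F]\<close> evaluates into \<open>N\<close>; but \<open>w\<close> evaluates into
  \<open>N\<close> only if the coefficient under consideration has the claimed divisibility.

  For \<open>a\<^sub>i\<^sub>j\<close> send \<open>s\<^sub>i, s\<^sub>j\<close>, and for \<open>b\<^sub>i, c\<^sub>i\<close> send \<open>s\<^sub>i, s\<^sub>i\<^sub>+\<^sub>1\<close>, to the generators \<open>x, y\<close> of the free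
  nilpotent group of class 3, all other generators to 1; then \<open>w\<close> becomes \<open>[x,y]\<^sup>a\<close>, respectively
  \<open>[x,y,x]\<^sup>b [x,y,xy\<^sup>-\<^sup>1]\<^sup>c\<close>, and \<open>N\<close> is spanned by \<open>[x\<^sup>m,y]\<close>, \<open>[x,y\<^sup>m]\<close> and the \<open>m\<close>-th powers of the
  central commutators. For \<open>d\<^sub>i\<close> with \<open>m\<close> even, send \<open>s\<^sub>i, s\<^sub>i\<^sub>+\<^sub>1, s\<^sub>i\<^sub>+\<^sub>2\<close> to the elementary matrices in a
  central extension of \<open>UT\<^sub>4(\<int>)\<close> by \<open>\<int>/2\<close> in which \<open>[E\<^sub>1\<^sub>3, E\<^sub>2\<^sub>4]\<close> is the nontrivial central
  element, and let \<open>N\<close> consist of the matrices with even entries.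
\<close>

lemma inv_letter_inv_letter [simp]: "inv_letter (inv_letter x) = x"
  by (simp add: inv_letter_def)

lemma reduced_ConsD: "reduced (x # ys) \<Longrightarrow> reduced ys"
  by (cases ys) auto

lemma reduced_push_letter: "reduced w \<Longrightarrow> reduced (push_letter x w)"
  by (cases w) (auto dest: reduced_ConsD)

lemma push_letter_cancel: "reduced w \<Longrightarrow> push_letter x (push_letter (inv_letter x) w) = w"
  by (induction w rule: reduced.induct) auto

lemma reduced_foldr_push_letter: "reduced w \<Longrightarrow> reduced (foldr push_letter xs w)"
  by (induction xs) (auto intro: reduced_push_letter)

lemma reduced_reduce: "reduced (reduce xs)"
  unfolding reduce_def by (rule reduced_foldr_push_letter) simp

lemma reduce_eq_self: "reduced xs \<Longrightarrow> reduce xs = xs"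
  by (induction xs rule: reduced.induct) (auto simp: reduce_def)

lemma foldr_push_letter_push_letter:
  assumes "reduced xs" "reduced w"
  shows "foldr push_letter (push_letter x xs) w = push_letter x (foldr push_letter xs w)"
proof (cases xs)
  case (Cons y ys)
  have "reduced (foldr push_letter ys w)"
    using assms(2) by (rule reduced_foldr_push_letter)
  then show ?thesis
    using Cons by (cases "y = inv_letter x") (auto simp: push_letter_cancel)
qed simp

lemma foldr_push_letter_reduce:
  assumes "reduced w"
  shows "foldr push_letter (reduce xs) w = foldr push_letter xs w"
proof (induction xs)
  case (Cons x xs)
  have "reduce (x # xs) = push_letter x (reduce xs)"
    by (simp add: reduce_def)
  then show ?case
    using Cons foldr_push_letter_push_letter[OF reduced_reduce assms] by simp
qed (simp add: reduce_def)

lemma reduce_append: "reduce (xs @ ys) = foldr push_letter xs (reduce ys)"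
  by (simp add: reduce_def)

lemma set_push_letter: "set (push_letter x w) \<subseteq> insert x (set w)"
  by (cases w) auto

lemma set_reduce: "set (reduce xs) \<subseteq> set xs"
proof -
  have "set (foldr push_letter xs w) \<subseteq> set xs \<union> set w" for w
    by (induction xs) (use set_push_letter in fastforce)+
  then show ?thesis
    unfolding reduce_def by fastforce
qed

lemma foldr_push_letter_inverse:
  "reduced ws \<Longrightarrow> foldr push_letter (rev (map inv_letter ws)) ws = []"
  by (induction ws) (auto dest: reduced_ConsD)

lemma group_free_group: "group (free_group n)"
proof (rule groupI)
  let ?F = "free_group n"
  show "x \<otimes>\<^bsub>?F\<^esub> y \<in> carrier ?F" if "x \<in> carrier ?F" "y \<in> carrier ?F" for x y
    using that set_reduce[of "x @ y"] by (auto simp: free_group_def reduced_reduce)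
  show "\<one>\<^bsub>?F\<^esub> \<in> carrier ?F"
    by (simp add: free_group_def)
  show "x \<otimes>\<^bsub>?F\<^esub> y \<otimes>\<^bsub>?F\<^esub> z = x \<otimes>\<^bsub>?F\<^esub> (y \<otimes>\<^bsub>?F\<^esub> z)"
    if "x \<in> carrier ?F" "y \<in> carrier ?F" "z \<in> carrier ?F" for x y z
  proof -
    have "reduce (reduce (x @ y) @ z) = foldr push_letter (reduce (x @ y)) (reduce z)"
      by (rule reduce_append)
    also have "\<dots> = foldr push_letter (x @ y) (reduce z)"
      by (rule foldr_push_letter_reduce[OF reduced_reduce])
    also have "\<dots> = reduce (x @ reduce (y @ z))"
      by (simp add: reduce_append reduce_eq_self reduced_foldr_push_letter reduced_reduce)
    finally show ?thesis
      by (simp add: free_group_def)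
  qed
  show "\<one>\<^bsub>?F\<^esub> \<otimes>\<^bsub>?F\<^esub> x = x" if "x \<in> carrier ?F" for x
    using that by (simp add: free_group_def reduce_eq_self)
  show "\<exists>y\<in>carrier ?F. y \<otimes>\<^bsub>?F\<^esub> x = \<one>\<^bsub>?F\<^esub>" if "x \<in> carrier ?F" for x
  proof
    let ?y = "reduce (rev (map inv_letter x))"
    have "reduced x"
      using that by (simp add: free_group_def)
    then have "reduce (?y @ x) = []"
      by (simp add: reduce_append foldr_push_letter_reduce reduce_eq_self foldr_push_letter_inverse)
    then show "?y \<otimes>\<^bsub>?F\<^esub> x = \<one>\<^bsub>?F\<^esub>"
      by (simp add: free_group_def)
    show "?y \<in> carrier ?F"
      using that set_reduce[of "rev (map inv_letter x)"]
      by (fastforce simp: free_group_def reduced_reduce inv_letter_def)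
  qed
qed

lemma gen_in_carrier_iff: "gen i \<in> carrier (free_group n) \<longleftrightarrow> 1 \<le> i \<and> i < n"
  by (auto simp: free_group_def gen_def)

context group
begin

lemma mult_inv_cancel_left [simp]: "x \<in> carrier G \<Longrightarrow> y \<in> carrier G \<Longrightarrow> x \<otimes> (inv x \<otimes> y) = y"
  by (simp add: m_assoc[symmetric])

lemma inv_mult_cancel_left [simp]: "x \<in> carrier G \<Longrightarrow> y \<in> carrier G \<Longrightarrow> inv x \<otimes> (x \<otimes> y) = y"
  by (simp add: m_assoc[symmetric])

lemma comm_closed [simp]: "x \<in> carrier G \<Longrightarrow> y \<in> carrier G \<Longrightarrow> comm G x y \<in> carrier G"
  by (simp add: comm_def)

lemma comm_one_left [simp]: "x \<in> carrier G \<Longrightarrow> comm G \<one> x = \<one>"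
  by (simp add: comm_def)

lemma comm_one_right [simp]: "x \<in> carrier G \<Longrightarrow> comm G x \<one> = \<one>"
  by (simp add: comm_def)

lemma comm_mult_right:
  "k \<in> carrier G \<Longrightarrow> x \<in> carrier G \<Longrightarrow> y \<in> carrier G \<Longrightarrow>
     comm G k (x \<otimes> y) = comm G k y \<otimes> (inv y \<otimes> comm G k x \<otimes> y)"
  by (simp add: comm_def m_assoc inv_mult_group)

lemma comm_inv_right:
  "k \<in> carrier G \<Longrightarrow> x \<in> carrier G \<Longrightarrow> comm G k (inv x) = x \<otimes> inv (comm G k x) \<otimes> inv x"
  by (simp add: comm_def m_assoc inv_mult_group)

lemma comm_mult_left:
  "x \<in> carrier G \<Longrightarrow> y \<in> carrier G \<Longrightarrow> g \<in> carrier G \<Longrightarrow>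
     comm G (x \<otimes> y) g = inv y \<otimes> comm G x g \<otimes> y \<otimes> comm G y g"
  by (simp add: comm_def m_assoc inv_mult_group)

lemma comm_inv_left:
  "x \<in> carrier G \<Longrightarrow> g \<in> carrier G \<Longrightarrow> comm G (inv x) g = x \<otimes> inv (comm G x g) \<otimes> inv x"
  by (simp add: comm_def m_assoc inv_mult_group)

lemma comm_conj_left:
  "x \<in> carrier G \<Longrightarrow> f \<in> carrier G \<Longrightarrow> g \<in> carrier G \<Longrightarrow>
     comm G (f \<otimes> x \<otimes> inv f) g = f \<otimes> comm G x (inv f \<otimes> g \<otimes> f) \<otimes> inv f"
  by (simp add: comm_def m_assoc inv_mult_group)

lemma normal_closure_subset_carrier:
  assumes "S \<subseteq> carrier G"
  shows "normal_closure G S \<subseteq> carrier G"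
proof -
  have "(\<Union>g\<in>carrier G. (\<lambda>r. g \<otimes> r \<otimes> inv g) ` S) \<subseteq> carrier G"
    using assms by auto
  then show ?thesis
    unfolding normal_closure_def using generate_in_carrier by blast
qed

lemma list_prod_map_additive:
  fixes \<iota> :: "'c::monoid_add \<Rightarrow> 'a"
  assumes add: "\<And>x y. \<iota> (x + y) = \<iota> x \<otimes> \<iota> y" and closed: "\<And>x. \<iota> x \<in> carrier G"
  shows "list_prod G (map \<iota> xs) = \<iota> (sum_list xs)"
proof -
  have "\<iota> 0 = \<one>"
    using add[of 0 0] closed[of 0] by (metis add_0 l_cancel_one')
  then show ?thesis
    by (induction xs) (simp_all add: list_prod_def add)
qed

lemma int_pow_additive:
  fixes \<iota> :: "int \<Rightarrow> 'a"
  assumes add: "\<And>x y. \<iota> (x + y) = \<iota> x \<otimes> \<iota> y" and closed: "\<And>x. \<iota> x \<in> carrier G"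
  shows "\<iota> x [^] (k::int) = \<iota> (k * x)"
proof -
  have zero: "\<iota> 0 = \<one>"
    using add[of 0 0] closed[of 0] by (metis add_0 l_cancel_one')
  have nat_pow: "\<iota> x [^] (j::nat) = \<iota> (of_nat j * x)" for j
    by (induction j) (simp_all add: zero add[symmetric] algebra_simps)
  have "inv (\<iota> y) = \<iota> (- y)" for y
    using add[of "-y" y] zero closed by (simp add: inv_equality)
  then show ?thesis
    by (cases "k < 0") (simp_all add: int_pow_def2 nat_pow)
qed

end

definition eval_letter :: "('g, 'x) monoid_scheme \<Rightarrow> (nat \<Rightarrow> 'g) \<Rightarrow> nat \<times> bool \<Rightarrow> 'g" where
  "eval_letter G h l = (if snd l then inv\<^bsub>G\<^esub> (h (fst l)) else h (fst l))"

definition eval_word :: "('g, 'x) monoid_scheme \<Rightarrow> (nat \<Rightarrow> 'g) \<Rightarrow> (nat \<times> bool) list \<Rightarrow> 'g" where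
  "eval_word G h ws = foldr (\<lambda>l g. eval_letter G h l \<otimes>\<^bsub>G\<^esub> g) ws \<one>\<^bsub>G\<^esub>"

locale word_evaluation = group G for G (structure) +
  fixes h :: "nat \<Rightarrow> 'a"
  assumes h_closed [simp]: "h i \<in> carrier G"
begin

lemma eval_letter_closed [simp]: "eval_letter G h l \<in> carrier G"
  by (simp add: eval_letter_def)

lemma eval_word_Nil [simp]: "eval_word G h [] = \<one>"
  by (simp add: eval_word_def)

lemma eval_word_Cons [simp]: "eval_word G h (l # ws) = eval_letter G h l \<otimes> eval_word G h ws"
  by (simp add: eval_word_def)

lemma eval_word_closed [simp]: "eval_word G h ws \<in> carrier G"
  by (induction ws) auto

lemma eval_letter_inv_letter: "eval_letter G h (inv_letter l) = inv (eval_letter G h l)"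
  by (cases l) (auto simp: eval_letter_def inv_letter_def)

lemma eval_word_push_letter:
  "eval_word G h (push_letter x w) = eval_letter G h x \<otimes> eval_word G h w"
proof (cases w)
  case (Cons y ys)
  then show ?thesis
    by (cases "y = inv_letter x") (simp_all add: eval_letter_inv_letter m_assoc[symmetric])
qed simp

lemma eval_word_append: "eval_word G h (xs @ ys) = eval_word G h xs \<otimes> eval_word G h ys"
  by (induction xs) (auto simp: m_assoc)

lemma eval_word_reduce: "eval_word G h (reduce xs) = eval_word G h xs"
proof -
  have "eval_word G h (foldr push_letter xs w) = eval_word G h xs \<otimes> eval_word G h w" for w
    by (induction xs) (auto simp: eval_word_push_letter m_assoc)
  then show ?thesis
    by (simp add: reduce_def)
qed

lemma eval_word_inverse: "eval_word G h (rev (map inv_letter ws)) = inv (eval_word G h ws)"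
  by (induction ws) (simp_all add: eval_word_append eval_letter_inv_letter inv_mult_group)

lemma eval_word_mult:
  "eval_word G h (x \<otimes>\<^bsub>free_group n\<^esub> y) = eval_word G h x \<otimes> eval_word G h y"
  by (simp add: free_group_def eval_word_reduce eval_word_append)

lemma group_hom_eval_word: "group_hom (free_group n) G (eval_word G h)"
  by (intro group_hom.intro group_hom_axioms.intro group_free_group is_group homI)
    (simp_all add: eval_word_mult)

lemma eval_word_gen [simp]: "eval_word G h (gen i) = h i"
  by (simp add: gen_def eval_letter_def)

lemma eval_word_inv:
  "x \<in> carrier (free_group n) \<Longrightarrow> eval_word G h (inv\<^bsub>free_group n\<^esub> x) = inv (eval_word G h x)"
  by (rule group_hom.hom_inv[OF group_hom_eval_word])

lemma eval_word_comm:
  assumes "x \<in> carrier (free_group n)" "y \<in> carrier (free_group n)"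
  shows "eval_word G h (comm (free_group n) x y) = comm G (eval_word G h x) (eval_word G h y)"
proof -
  interpret F: group "free_group n"
    by (rule group_free_group)
  show ?thesis
    using assms by (simp add: comm_def eval_word_mult eval_word_inv)
qed

lemma eval_word_int_pow:
  "x \<in> carrier (free_group n) \<Longrightarrow>
     eval_word G h (x [^]\<^bsub>free_group n\<^esub> (k::int)) = eval_word G h x [^] k"
  by (rule group_hom.hom_int_pow[OF group_hom_eval_word])

lemma eval_word_nat_pow:
  "x \<in> carrier (free_group n) \<Longrightarrow>
     eval_word G h (x [^]\<^bsub>free_group n\<^esub> (k::nat)) = eval_word G h x [^] k"
  by (rule group_hom.hom_nat_pow[OF group_hom_eval_word])

end

section \<open>Images of the subgroup [R,F]\<close>

locale normalized_word_evaluation = word_evaluation +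
  fixes N :: "'a set"
  assumes subgroup_N: "subgroup N G"
    and h_conj_mem: "x \<in> N \<Longrightarrow> h i \<otimes> x \<otimes> inv (h i) \<in> N"
    and h_inv_conj_mem: "x \<in> N \<Longrightarrow> inv (h i) \<otimes> x \<otimes> h i \<in> N"
begin

lemma N_closed [simp]: "x \<in> N \<Longrightarrow> x \<in> carrier G"
  using subgroup.mem_carrier[OF subgroup_N] .

lemma eval_letter_conj_mem: "x \<in> N \<Longrightarrow> eval_letter G h l \<otimes> x \<otimes> inv (eval_letter G h l) \<in> N"
  by (cases "snd l") (simp_all add: eval_letter_def h_conj_mem h_inv_conj_mem)

lemma eval_word_conj_mem: "x \<in> N \<Longrightarrow> eval_word G h ws \<otimes> x \<otimes> inv (eval_word G h ws) \<in> N"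
proof (induction ws arbitrary: x)
  case (Cons l ws)
  let ?a = "eval_letter G h l" and ?e = "eval_word G h ws"
  have "?a \<otimes> ?e \<otimes> x \<otimes> inv (?a \<otimes> ?e) = ?a \<otimes> (?e \<otimes> x \<otimes> inv ?e) \<otimes> inv ?a"
    using Cons.prems by (simp add: m_assoc inv_mult_group)
  then show ?case
    using Cons eval_letter_conj_mem by simp
qed simp

lemma eval_word_inv_conj_mem: "x \<in> N \<Longrightarrow> inv (eval_word G h ws) \<otimes> x \<otimes> eval_word G h ws \<in> N"
  using eval_word_conj_mem[of x "rev (map inv_letter ws)"] by (simp add: eval_word_inverse)

lemma comm_eval_word_mem:
  assumes k: "k \<in> carrier G" and gens: "\<And>i. comm G k (h i) \<in> N"
  shows "comm G k (eval_word G h ws) \<in> N"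
proof (induction ws)
  case Nil
  show ?case
    using k subgroup.one_closed[OF subgroup_N] by simp
next
  case (Cons l ws)
  let ?a = "eval_letter G h l" and ?e = "eval_word G h ws"
  have "comm G k ?a \<in> N"
  proof (cases "snd l")
    case True
    then have "comm G k ?a = h (fst l) \<otimes> inv (comm G k (h (fst l))) \<otimes> inv (h (fst l))"
      using k by (simp add: eval_letter_def comm_inv_right)
    then show ?thesis
      using gens subgroup.m_inv_closed[OF subgroup_N] h_conj_mem by simp
  qed (use gens in \<open>simp add: eval_letter_def\<close>)
  then have "inv ?e \<otimes> comm G k ?a \<otimes> ?e \<in> N"
    by (rule eval_word_inv_conj_mem)
  then show ?case
    using Cons k subgroup.m_closed[OF subgroup_N] by (simp add: comm_mult_right)
qed

definition image_center_mod :: "'a set" where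
  "image_center_mod =
     {k \<in> range (eval_word G h). \<forall>g \<in> range (eval_word G h). comm G k g \<in> N}"

lemma subgroup_image_center_mod: "subgroup image_center_mod G"
proof (rule subgroupI)
  show "image_center_mod \<subseteq> carrier G"
    by (auto simp: image_center_mod_def)
  have "\<one> \<in> range (eval_word G h)"
    by (metis eval_word_Nil rangeI)
  moreover have "comm G \<one> g \<in> N" if "g \<in> range (eval_word G h)" for g
    using that subgroup.one_closed[OF subgroup_N] by auto
  ultimately show "image_center_mod \<noteq> {}"
    unfolding image_center_mod_def by blast
next
  fix k assume "k \<in> image_center_mod"
  then obtain u where k: "k = eval_word G h u" and c: "\<And>g. g \<in> range (eval_word G h) \<Longrightarrow> comm G k g \<in> N"
    by (auto simp: image_center_mod_def)
  have "inv k = eval_word G h (rev (map inv_letter u))"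
    by (simp add: k eval_word_inverse)
  moreover have "comm G (inv k) g \<in> N" if "g \<in> range (eval_word G h)" for g
    using that c[OF that] k eval_word_conj_mem[OF subgroup.m_inv_closed[OF subgroup_N]]
    by (auto simp: comm_inv_left)
  ultimately show "inv k \<in> image_center_mod"
    by (auto simp: image_center_mod_def)
next
  fix k l assume "k \<in> image_center_mod" "l \<in> image_center_mod"
  then obtain u v where k: "k = eval_word G h u" and l: "l = eval_word G h v"
    and ck: "\<And>g. g \<in> range (eval_word G h) \<Longrightarrow> comm G k g \<in> N"
    and cl: "\<And>g. g \<in> range (eval_word G h) \<Longrightarrow> comm G l g \<in> N"
    by (auto simp: image_center_mod_def)
  have "k \<otimes> l = eval_word G h (u @ v)"
    by (simp add: k l eval_word_append)
  moreover have "comm G (k \<otimes> l) g \<in> N" if "g \<in> range (eval_word G h)" for g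
    using that ck[OF that] cl[OF that] k l eval_word_inv_conj_mem subgroup.m_closed[OF subgroup_N]
    by (auto simp: comm_mult_left)
  ultimately show "k \<otimes> l \<in> image_center_mod"
    by (auto simp: image_center_mod_def)
qed

lemma image_center_mod_conj:
  assumes "k \<in> image_center_mod" and "f \<in> range (eval_word G h)"
  shows "f \<otimes> k \<otimes> inv f \<in> image_center_mod"
proof -
  obtain u v where f: "f = eval_word G h u" and k: "k = eval_word G h v"
    and c: "\<And>g. g \<in> range (eval_word G h) \<Longrightarrow> comm G k g \<in> N"
    using assms by (auto simp: image_center_mod_def)
  have "f \<otimes> k \<otimes> inv f = eval_word G h (u @ v @ rev (map inv_letter u))"
    by (simp add: f k eval_word_append eval_word_inverse m_assoc)
  moreover have "comm G (f \<otimes> k \<otimes> inv f) g \<in> N" if g: "g \<in> range (eval_word G h)" for g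
  proof -
    obtain w where g: "g = eval_word G h w"
      using g by auto
    have "inv f \<otimes> g \<otimes> f = eval_word G h (rev (map inv_letter u) @ w @ u)"
      by (simp add: f g eval_word_append eval_word_inverse m_assoc)
    then have "comm G k (inv f \<otimes> g \<otimes> f) \<in> N"
      by (simp add: c)
    then show ?thesis
      using f k g eval_word_conj_mem by (simp add: comm_conj_left)
  qed
  ultimately show ?thesis
    by (auto simp: image_center_mod_def)
qed

lemma eval_normal_closure_subset:
  assumes S: "S \<subseteq> carrier (free_group n)"
    and relators: "\<And>\<rho> i. \<rho> \<in> S \<Longrightarrow> comm G (eval_word G h \<rho>) (h i) \<in> N"
  shows "eval_word G h ` normal_closure (free_group n) S \<subseteq> image_center_mod"
proof -
  let ?F = "free_group n" and ?e = "eval_word G h"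
  interpret e: group_hom ?F G ?e
    by (rule group_hom_eval_word)
  let ?C = "\<Union>g\<in>carrier ?F. (\<lambda>r. g \<otimes>\<^bsub>?F\<^esub> r \<otimes>\<^bsub>?F\<^esub> inv\<^bsub>?F\<^esub> g) ` S"
  have C: "?C \<subseteq> carrier ?F"
    using S by auto
  have "?e ` ?C \<subseteq> image_center_mod"
  proof clarify
    fix g r assume g: "g \<in> carrier ?F" and r: "r \<in> S"
    have "?e r \<in> image_center_mod"
      using comm_eval_word_mem[OF eval_word_closed relators[OF r]] by (auto simp: image_center_mod_def)
    then have "?e g \<otimes> ?e r \<otimes> inv (?e g) \<in> image_center_mod"
      by (simp add: image_center_mod_conj)
    then show "?e (g \<otimes>\<^bsub>?F\<^esub> r \<otimes>\<^bsub>?F\<^esub> inv\<^bsub>?F\<^esub> g) \<in> image_center_mod"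
      using g r S by auto
  qed
  then show ?thesis
    unfolding normal_closure_def e.generate_img[OF C, symmetric]
    by (rule generate_subgroup_incl[OF _ subgroup_image_center_mod])
qed

theorem eval_comm_subgroup_normal_closure_mem:
  assumes S: "S \<subseteq> carrier (free_group n)"
    and relators: "\<And>\<rho> i. \<rho> \<in> S \<Longrightarrow> comm G (eval_word G h \<rho>) (h i) \<in> N"
    and x: "x \<in> comm_subgroup (free_group n) (normal_closure (free_group n) S) (carrier (free_group n))"
  shows "eval_word G h x \<in> N"
proof -
  let ?F = "free_group n" and ?e = "eval_word G h"
  interpret F: group ?F
    by (rule group_free_group)
  interpret e: group_hom ?F G ?e
    by (rule group_hom_eval_word)
  let ?K = "{comm ?F r f | r f. r \<in> normal_closure ?F S \<and> f \<in> carrier ?F}"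
  have R: "normal_closure ?F S \<subseteq> carrier ?F"
    using S by (rule F.normal_closure_subset_carrier)
  then have K: "?K \<subseteq> carrier ?F"
    by (auto simp: comm_def)
  have "?e ` ?K \<subseteq> N"
  proof clarify
    fix r f assume r: "r \<in> normal_closure ?F S" and f: "f \<in> carrier ?F"
    have "?e r \<in> image_center_mod"
      using eval_normal_closure_subset[OF S relators] r by blast
    then show "?e (comm ?F r f) \<in> N"
      using R r f by (auto simp: eval_word_comm image_center_mod_def)
  qed
  then have "?e ` generate ?F ?K \<subseteq> N"
    unfolding e.generate_img[OF K, symmetric] by (rule generate_subgroup_incl[OF _ subgroup_N])
  then show ?thesis
    using x by (auto simp: comm_subgroup_def)
qed

end

lemma UT_relatorE:
  assumes "\<rho> \<in> UT_relators n m"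
  obtains (power) k where "1 \<le> k" "k < n" "\<rho> = gen k [^]\<^bsub>free_group n\<^esub> m"
  | (far) k l where "1 \<le> k" "k + 2 \<le> l" "l < n" "\<rho> = comm (free_group n) (gen k) (gen l)"
  | (left) k where "1 \<le> k" "Suc k < n"
      "\<rho> = comm (free_group n) (comm (free_group n) (gen k) (gen (Suc k))) (gen k)"
  | (right) k where "1 \<le> k" "Suc k < n"
      "\<rho> = comm (free_group n) (comm (free_group n) (gen k) (gen (Suc k))) (gen (Suc k))"
  | (double) k where "1 \<le> k" "Suc (Suc k) < n"
      "\<rho> = comm (free_group n) (comm (free_group n) (gen k) (gen (Suc k)))
              (comm (free_group n) (gen (Suc k)) (gen (Suc (Suc k))))"
  using assms unfolding UT_relators_def Let_def
  by (elim UnE CollectE exE conjE) (rule that; simp; linarith)+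

lemma UT_relators_subset_carrier: "UT_relators n m \<subseteq> carrier (free_group n)"
proof
  fix \<rho> assume "\<rho> \<in> UT_relators n m"
  interpret F: group "free_group n"
    by (rule group_free_group)
  from \<open>\<rho> \<in> UT_relators n m\<close> show "\<rho> \<in> carrier (free_group n)"
    by (cases rule: UT_relatorE) (simp_all add: gen_in_carrier_iff)
qed

context word_evaluation
begin

lemma eval_UT_relatorE:
  assumes "\<rho> \<in> UT_relators n m"
  obtains (power) k where "eval_word G h \<rho> = h k [^] m"
  | (far) k l where "k + 2 \<le> l" "eval_word G h \<rho> = comm G (h k) (h l)"
  | (left) k where "eval_word G h \<rho> = comm G (comm G (h k) (h (Suc k))) (h k)"
  | (right) k where "eval_word G h \<rho> = comm G (comm G (h k) (h (Suc k))) (h (Suc k))"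
  | (double) k where
      "eval_word G h \<rho> = comm G (comm G (h k) (h (Suc k))) (comm G (h (Suc k)) (h (Suc (Suc k))))"
proof -
  interpret F: group "free_group n"
    by (rule group_free_group)
  from assms show thesis
    by (cases rule: UT_relatorE)
      (auto simp: eval_word_nat_pow eval_word_comm gen_in_carrier_iff intro: that)
qed

lemma eval_word_list_prod:
  "eval_word G h (list_prod (free_group n) xs) = list_prod G (map (eval_word G h) xs)"
  by (induction xs) (simp_all add: list_prod_def eval_word_mult, simp add: free_group_def)

lemma eval_word_w_factors:
  fixes k :: int
  shows "1 \<le> i \<Longrightarrow> i + 2 \<le> j \<Longrightarrow> j < n \<Longrightarrow>
      eval_word G h (comm (free_group n) (gen i) (gen j) [^]\<^bsub>free_group n\<^esub> k)
      = comm G (h i) (h j) [^] k"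
    and "1 \<le> i \<Longrightarrow> i < n - 1 \<Longrightarrow>
      eval_word G h (comm (free_group n) (comm (free_group n) (gen i) (gen (Suc i))) (gen i)
        [^]\<^bsub>free_group n\<^esub> k)
      = comm G (comm G (h i) (h (Suc i))) (h i) [^] k"
    and "1 \<le> i \<Longrightarrow> i < n - 1 \<Longrightarrow>
      eval_word G h (comm (free_group n) (comm (free_group n) (gen i) (gen (Suc i)))
        (gen i \<otimes>\<^bsub>free_group n\<^esub> inv\<^bsub>free_group n\<^esub> gen (Suc i)) [^]\<^bsub>free_group n\<^esub> k)
      = comm G (comm G (h i) (h (Suc i))) (h i \<otimes> inv (h (Suc i))) [^] k"
    and "1 \<le> i \<Longrightarrow> i < n - 2 \<Longrightarrow>
      eval_word G h (comm (free_group n) (comm (free_group n) (gen i) (gen (Suc i)))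
        (comm (free_group n) (gen (Suc i)) (gen (Suc (Suc i)))) [^]\<^bsub>free_group n\<^esub> k)
      = comm G (comm G (h i) (h (Suc i))) (comm G (h (Suc i)) (h (Suc (Suc i)))) [^] k"
  using group.comm_closed[OF group_free_group] monoid.m_closed[OF group.is_monoid[OF group_free_group]]
    group.inv_closed[OF group_free_group]
  by (simp_all add: eval_word_int_pow eval_word_comm eval_word_mult eval_word_inv gen_in_carrier_iff)

lemma eval_w_elem:
  "eval_word G h (w_elem n a b c d) =
       list_prod G [comm G (h i) (h j) [^] a i j. i \<leftarrow> [1..<n], j \<leftarrow> [i+2..<n]]
     \<otimes> list_prod G [comm G (comm G (h i) (h (i+1))) (h i) [^] b i. i \<leftarrow> [1..<n-1]]
     \<otimes> list_prod G [comm G (comm G (h i) (h (i+1))) (h i \<otimes> inv (h (i+1))) [^] c i. i \<leftarrow> [1..<n-1]]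
     \<otimes> list_prod G [comm G (comm G (h i) (h (i+1))) (comm G (h (i+1)) (h (i+2))) [^] d i.
                      i \<leftarrow> [1..<n-2]]"
  (is "_ = list_prod G ?A \<otimes> list_prod G ?B \<otimes> list_prod G ?C \<otimes> list_prod G ?D")
proof -
  let ?F = "free_group n"
  have "map (eval_word G h) [comm ?F (gen i) (gen j) [^]\<^bsub>?F\<^esub> a i j. i \<leftarrow> [1..<n], j \<leftarrow> [i+2..<n]]
      = ?A"
    by (auto simp: map_concat intro!: arg_cong[where f=concat] map_cong eval_word_w_factors(1))
  moreover have "map (eval_word G h)
      [comm ?F (comm ?F (gen i) (gen (i+1))) (gen i) [^]\<^bsub>?F\<^esub> b i. i \<leftarrow> [1..<n-1]] = ?B"
    by (auto intro!: map_cong eval_word_w_factors(2))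
  moreover have "map (eval_word G h) [comm ?F (comm ?F (gen i) (gen (i+1)))
      (gen i \<otimes>\<^bsub>?F\<^esub> inv\<^bsub>?F\<^esub> (gen (i+1))) [^]\<^bsub>?F\<^esub> c i. i \<leftarrow> [1..<n-1]] = ?C"
    by (auto intro!: map_cong eval_word_w_factors(3))
  moreover have "map (eval_word G h) [comm ?F (comm ?F (gen i) (gen (i+1)))
      (comm ?F (gen (i+1)) (gen (i+2))) [^]\<^bsub>?F\<^esub> d i. i \<leftarrow> [1..<n-2]] = ?D"
    by (auto intro!: map_cong eval_word_w_factors(4))
  ultimately show ?thesis
    unfolding w_elem_def Let_def eval_word_mult eval_word_list_prod by (simp only:)
qed

lemma eval_w_elem_additive:
  fixes \<iota> :: "'c::monoid_add \<Rightarrow> 'a"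
  assumes add: "\<And>x y. \<iota> (x + y) = \<iota> x \<otimes> \<iota> y" and closed: "\<And>x. \<iota> x \<in> carrier G"
    and far: "\<And>k l. 1 \<le> k \<Longrightarrow> k + 2 \<le> l \<Longrightarrow> l < n \<Longrightarrow> comm G (h k) (h l) [^] a k l = \<iota> (fa k l)"
    and left: "\<And>k. 1 \<le> k \<Longrightarrow> k < n - 1 \<Longrightarrow>
      comm G (comm G (h k) (h (Suc k))) (h k) [^] b k = \<iota> (fb k)"
    and mixed: "\<And>k. 1 \<le> k \<Longrightarrow> k < n - 1 \<Longrightarrow>
      comm G (comm G (h k) (h (Suc k))) (h k \<otimes> inv (h (Suc k))) [^] c k = \<iota> (fc k)"
    and double: "\<And>k. 1 \<le> k \<Longrightarrow> k < n - 2 \<Longrightarrow>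
      comm G (comm G (h k) (h (Suc k))) (comm G (h (Suc k)) (h (Suc (Suc k)))) [^] d k = \<iota> (fd k)"
  shows "eval_word G h (w_elem n a b c d) =
    \<iota> (sum_list [fa k l. k \<leftarrow> [1..<n], l \<leftarrow> [k+2..<n]] + sum_list (map fb [1..<n-1])
       + sum_list (map fc [1..<n-1]) + sum_list (map fd [1..<n-2]))"
proof -
  have "[comm G (h k) (h l) [^] a k l. k \<leftarrow> [1..<n], l \<leftarrow> [k+2..<n]]
      = map \<iota> [fa k l. k \<leftarrow> [1..<n], l \<leftarrow> [k+2..<n]]"
    by (auto simp: map_concat intro!: arg_cong[where f=concat] map_cong far)
  moreover have "[comm G (comm G (h k) (h (k+1))) (h k) [^] b k. k \<leftarrow> [1..<n-1]]
      = map \<iota> (map fb [1..<n-1])"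
    by (auto intro!: map_cong left)
  moreover have "[comm G (comm G (h k) (h (k+1))) (h k \<otimes> inv (h (k+1))) [^] c k. k \<leftarrow> [1..<n-1]]
      = map \<iota> (map fc [1..<n-1])"
    by (auto intro!: map_cong mixed)
  moreover have "[comm G (comm G (h k) (h (k+1))) (comm G (h (k+1)) (h (k+2))) [^] d k.
      k \<leftarrow> [1..<n-2]] = map \<iota> (map fd [1..<n-2])"
    by (auto intro!: map_cong double)
  ultimately show ?thesis
    by (simp only: eval_w_elem list_prod_map_additive[OF add closed] add)
qed

end

theorem (in normalized_word_evaluation) eval_UT_comm_subgroup_mem:
  assumes power: "\<And>k l. comm G (h k [^] m) (h l) \<in> N"
    and far: "\<And>k l j. k + 2 \<le> l \<Longrightarrow> comm G (comm G (h k) (h l)) (h j) \<in> N"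
    and left: "\<And>k j. comm G (comm G (comm G (h k) (h (Suc k))) (h k)) (h j) \<in> N"
    and right: "\<And>k j. comm G (comm G (comm G (h k) (h (Suc k))) (h (Suc k))) (h j) \<in> N"
    and double: "\<And>k j.
      comm G (comm G (comm G (h k) (h (Suc k))) (comm G (h (Suc k)) (h (Suc (Suc k))))) (h j) \<in> N"
    and x: "x \<in> comm_subgroup (free_group n) (UT_R n m) (carrier (free_group n))"
  shows "eval_word G h x \<in> N"
  using UT_relators_subset_carrier _ x[unfolded UT_R_def]
proof (rule eval_comm_subgroup_normal_closure_mem)
  fix \<rho> i assume "\<rho> \<in> UT_relators n m"
  then show "comm G (eval_word G h \<rho>) (h i) \<in> N"
    by (cases rule: eval_UT_relatorE) (simp_all add: power far left right double)
qed

lemma sum_list_upt_delta: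
  "sum_list (map (\<lambda>k. if k = i then f k else 0) [p..<q])
     = (if p \<le> i \<and> i < q then f i else (0::'a::comm_monoid_add))"
  by (simp add: interv_sum_list_conv_sum_set_nat)

lemma sum_list_concat: "sum_list (concat xss) = sum_list (map sum_list xss)"
  by (induction xss) simp_all

lemma sum_list_upt_pairs_delta:
  assumes "1 \<le> i" "i + 2 \<le> j" "j < n"
  shows "sum_list [if k = i \<and> l = j then f k l else 0. k \<leftarrow> [1..<n], l \<leftarrow> [k+2..<n]]
    = (f i j :: 'a::comm_monoid_add)"
proof -
  have "sum_list (map (\<lambda>l. if k = i \<and> l = j then f k l else 0) [k+2..<n])
      = (if k = i then f i j else 0)" for k
    using assms by (cases "k = i") (simp_all add: sum_list_upt_delta del: upt_Suc)
  then show ?thesis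
    unfolding sum_list_concat map_map comp_def using assms by (simp add: sum_list_upt_delta del: upt_Suc)
qed

section \<open>A free nilpotent group of class 3\<close>

definition binom2 :: "int \<Rightarrow> int" where
  "binom2 x = x * (x - 1) div 2"

lemma two_times_binom2: "2 * binom2 x = x * (x - 1)"
  unfolding binom2_def by simp

lemma binom2_times_two: "binom2 x * 2 = x * x - x"
  using two_times_binom2[of x] by (simp add: algebra_simps)

lemma binom2_add: "binom2 (x + y) = binom2 x + binom2 y + x * y"
  using two_times_binom2[of "x + y"] two_times_binom2[of x] two_times_binom2[of y]
  by (simp add: algebra_simps)

lemma binom2_uminus: "binom2 (- x) = binom2 x + x"
  using two_times_binom2[of "- x"] two_times_binom2[of x] by (simp add: algebra_simps)

lemma binom2_0 [simp]: "binom2 0 = 0" and binom2_1 [simp]: "binom2 1 = 0"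
  and binom2_minus_1 [simp]: "binom2 (- 1) = 1"
  by (simp_all add: binom2_def)

lemma binom2_of_nat: "binom2 (int m) = int (m choose 2)"
  by (cases m) (simp_all add: binom2_def choose_two zdiv_int algebra_simps)

type_synonym fn3 = "int \<times> int \<times> int \<times> int \<times> int"

text \<open>The free nilpotent group of class 3 on \<open>x = (1,0,0,0,0)\<close> and \<open>y = (0,1,0,0,0)\<close>, in
  coordinates where \<open>[x,y]\<close>, \<open>[x,y,x]\<close> and \<open>[x,y,y]\<close> are the last three unit vectors.\<close>

fun fn3_mult :: "fn3 \<Rightarrow> fn3 \<Rightarrow> fn3" where
  "fn3_mult (a, b, c, d, e) (a', b', c', d', e') =
     (a + a', b + b', c + c' - a' * b, d + d' + c * a' - b * binom2 a',
      e + e' - a' * binom2 b + (c - a' * b) * b')"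

fun fn3_inv :: "fn3 \<Rightarrow> fn3" where
  "fn3_inv (a, b, c, d, e) =
     (- a, - b, - c - a * b, - d + (c + a * b) * a - b * binom2 a, - e + a * binom2 (- b) + c * b)"

definition FN3 :: "fn3 monoid" where
  "FN3 = \<lparr>carrier = UNIV, monoid.mult = fn3_mult, one = (0, 0, 0, 0, 0)\<rparr>"

lemma FN3_simps [simp]:
  "x \<otimes>\<^bsub>FN3\<^esub> y = fn3_mult x y" "\<one>\<^bsub>FN3\<^esub> = (0, 0, 0, 0, 0)" "carrier FN3 = UNIV"
  by (simp_all add: FN3_def)

lemma fn3_inv_mult: "fn3_mult (fn3_inv x) x = (0, 0, 0, 0, 0)"
  by (cases x) (simp add: binom2_uminus algebra_simps)

lemma group_FN3: "group FN3"
proof (rule groupI)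
  fix x :: fn3
  show "\<exists>y\<in>carrier FN3. y \<otimes>\<^bsub>FN3\<^esub> x = \<one>\<^bsub>FN3\<^esub>"
    by (rule bexI[of _ "fn3_inv x"]) (simp_all add: fn3_inv_mult)
qed (auto simp: binom2_add algebra_simps)

lemma inv_FN3 [simp]: "inv\<^bsub>FN3\<^esub> x = fn3_inv x"
  by (rule group.inv_equality[OF group_FN3]) (simp_all add: fn3_inv_mult)

lemma word_evaluation_FN3: "word_evaluation FN3 h"
  by (intro word_evaluation.intro word_evaluation_axioms.intro group_FN3) simp

lemma comm_FN3_derived [simp]: "comm FN3 (0, 0, c, d, e) g = (0, 0, 0, c * fst g, c * fst (snd g))"
  by (cases g) (simp add: comm_def binom2_uminus algebra_simps)

lemma nat_pow_FN3_x: "(a, 0, 0, 0, 0) [^]\<^bsub>FN3\<^esub> (k::nat) = (int k * a, 0, 0, 0, 0)"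
  by (induction k) (simp_all add: algebra_simps)

lemma nat_pow_FN3_y: "(0, b, 0, 0, 0) [^]\<^bsub>FN3\<^esub> (k::nat) = (0, int k * b, 0, 0, 0)"
  by (induction k) (simp_all add: algebra_simps)

lemma int_pow_FN3_derived: "(0, 0, c, d, e) [^]\<^bsub>FN3\<^esub> (k::int) = (0, 0, k * c, k * d, k * e)"
  using group.int_pow_additive[OF group_FN3, of "\<lambda>z. (0, 0, z * c, z * d, z * e)" 1 k]
  by (simp add: algebra_simps)

lemma comm_FN3_x_y: "comm FN3 (a, 0, 0, 0, 0) (0, b, 0, 0, 0) = (0, 0, a * b, b * binom2 a, a * binom2 b)"
  by (simp add: comm_def binom2_uminus binom2_times_two algebra_simps)

lemma comm_FN3_x_x [simp]: "comm FN3 (a, 0, 0, 0, 0) (a', 0, 0, 0, 0) = (0, 0, 0, 0, 0)"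
  and comm_FN3_y_y [simp]: "comm FN3 (0, b, 0, 0, 0) (0, b', 0, 0, 0) = (0, 0, 0, 0, 0)"
  by (simp_all add: comm_def binom2_uminus algebra_simps)

lemma comm_FN3_y_x:
  "comm FN3 (0, b, 0, 0, 0) (a, 0, 0, 0, 0) = (0, 0, - (a * b), - (b * binom2 a), - (a * binom2 b))"
  by (simp add: comm_def binom2_uminus binom2_times_two algebra_simps)

definition xy_images :: "nat \<Rightarrow> nat \<Rightarrow> nat \<Rightarrow> fn3" where
  "xy_images i j k =
     (if k = i then (1, 0, 0, 0, 0) else if k = j then (0, 1, 0, 0, 0) else (0, 0, 0, 0, 0))"

lemma xy_images_left [simp]: "xy_images i j i = (1, 0, 0, 0, 0)"
  and xy_images_right [simp]: "i \<noteq> j \<Longrightarrow> xy_images i j j = (0, 1, 0, 0, 0)"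
  by (simp_all add: xy_images_def)

lemma comm_xy_images:
  assumes "i < j"
  shows "comm FN3 (xy_images i j k) (xy_images i j l) =
    (if k = i \<and> l = j then (0, 0, 1, 0, 0) else if k = j \<and> l = i then (0, 0, -1, 0, 0)
     else (0, 0, 0, 0, 0))"
  using assms by (auto simp: xy_images_def comm_def)

lemma comm_xy_images_pow:
  assumes "i \<noteq> j"
  shows "comm FN3 (xy_images i j k [^]\<^bsub>FN3\<^esub> (m::nat)) (xy_images i j l) =
    (if k = i \<and> l = j then (0, 0, int m, binom2 (int m), 0)
     else if k = j \<and> l = i then (0, 0, - int m, 0, - binom2 (int m)) else (0, 0, 0, 0, 0))"
  using assms by (auto simp: xy_images_def nat_pow_FN3_x nat_pow_FN3_y comm_FN3_x_y comm_FN3_y_x)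

definition xy_coord_dvd :: "nat \<Rightarrow> fn3 set" where
  "xy_coord_dvd m = {(a, b, c, d, e). a = 0 \<and> b = 0 \<and> int m dvd c}"

lemma normalized_xy_coord_dvd:
  "normalized_word_evaluation FN3 (xy_images i j) (xy_coord_dvd m)"
proof (intro normalized_word_evaluation.intro normalized_word_evaluation_axioms.intro word_evaluation_FN3)
  show "subgroup (xy_coord_dvd m) FN3"
    by (rule group.subgroupI[OF group_FN3]) (auto simp: xy_coord_dvd_def)
qed (auto simp: xy_images_def xy_coord_dvd_def)

lemma eval_w_elem_xy_images_far:
  assumes "1 \<le> i" "i + 2 \<le> j" "j < n"
  shows "eval_word FN3 (xy_images i j) (w_elem n a b c d) = (0, 0, a i j, 0, 0)"
proof -
  interpret word_evaluation FN3 "xy_images i j"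
    by (rule word_evaluation_FN3)
  let ?\<iota> = "\<lambda>z. (0, 0, z, 0, 0) :: fn3"
  have "eval_word FN3 (xy_images i j) (w_elem n a b c d) =
    ?\<iota> (sum_list [if k = i \<and> l = j then a k l else 0. k \<leftarrow> [1..<n], l \<leftarrow> [k+2..<n]]
       + sum_list (map (\<lambda>_. 0) [1..<n-1]) + sum_list (map (\<lambda>_. 0) [1..<n-1])
       + sum_list (map (\<lambda>_. 0) [1..<n-2]))"
    using assms
    by (intro eval_w_elem_additive) (auto simp: comm_xy_images int_pow_FN3_derived)
  then show ?thesis
    using sum_list_upt_pairs_delta[OF assms] by simp
qed

lemma w_elem_comm_subgroup_dvd_a:
  assumes "1 \<le> i" "i + 2 \<le> j" "j < n"
    and w: "w_elem n a b c d \<in> comm_subgroup (free_group n) (UT_R n m) (carrier (free_group n))"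
  shows "int m dvd a i j"
proof -
  interpret normalized_word_evaluation FN3 "xy_images i j" "xy_coord_dvd m"
    by (rule normalized_xy_coord_dvd)
  have "eval_word FN3 (xy_images i j) (w_elem n a b c d) \<in> xy_coord_dvd m"
    using \<open>i + 2 \<le> j\<close>
    by (intro eval_UT_comm_subgroup_mem[OF _ _ _ _ _ w])
      (simp_all add: comm_xy_images comm_xy_images_pow xy_coord_dvd_def)
  then show ?thesis
    using eval_w_elem_xy_images_far[OF assms(1-3)] by (simp add: xy_coord_dvd_def)
qed

text \<open>The lattice spanned by \<open>[x\<^sup>m, y] = (0, 0, m, C(m,2), 0)\<close>, \<open>[x, y\<^sup>m] = (0, 0, m, 0, C(m,2))\<close>
  and the \<open>m\<close>-th powers of the central elements \<open>[x,y,x]\<close> and \<open>[x,y,y]\<close>.\<close>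

definition relator_lattice :: "nat \<Rightarrow> fn3 set" where
  "relator_lattice m =
     {(0, 0, (\<alpha> + \<beta>) * int m, \<alpha> * binom2 (int m) + \<gamma> * int m, \<beta> * binom2 (int m) + \<delta> * int m)
       | \<alpha> \<beta> \<gamma> \<delta>. True}"

lemma relator_lattice_memI:
  "c = (\<alpha> + \<beta>) * int m \<Longrightarrow> d = \<alpha> * binom2 (int m) + \<gamma> * int m \<Longrightarrow>
     e = \<beta> * binom2 (int m) + \<delta> * int m \<Longrightarrow> (0, 0, c, d, e) \<in> relator_lattice m"
  unfolding relator_lattice_def by blast

lemma relator_lattice_memE:
  assumes "g \<in> relator_lattice m"
  obtains \<alpha> \<beta> \<gamma> \<delta> where
    "g = (0, 0, (\<alpha> + \<beta>) * int m, \<alpha> * binom2 (int m) + \<gamma> * int m, \<beta> * binom2 (int m) + \<delta> * int m)"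
  using assms unfolding relator_lattice_def by blast

lemma subgroup_relator_lattice: "subgroup (relator_lattice m) FN3"
proof (rule group.subgroupI[OF group_FN3])
  show "relator_lattice m \<noteq> {}"
    using relator_lattice_memI[of 0 0 0 m 0 0 0 0] by auto
next
  fix g assume "g \<in> relator_lattice m"
  then obtain \<alpha> \<beta> \<gamma> \<delta> where g: "g = (0, 0, (\<alpha> + \<beta>) * int m,
      \<alpha> * binom2 (int m) + \<gamma> * int m, \<beta> * binom2 (int m) + \<delta> * int m)"
    by (rule relator_lattice_memE)
  show "inv\<^bsub>FN3\<^esub> g \<in> relator_lattice m"
    by (simp add: g)
      (rule relator_lattice_memI[of _ "- \<alpha>" "- \<beta>" _ _ "- \<gamma>" _ "- \<delta>"]; simp add: algebra_simps)
next
  fix g g' assume "g \<in> relator_lattice m" "g' \<in> relator_lattice m"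
  then obtain \<alpha> \<beta> \<gamma> \<delta> \<alpha>' \<beta>' \<gamma>' \<delta>' where
    g: "g = (0, 0, (\<alpha> + \<beta>) * int m,
      \<alpha> * binom2 (int m) + \<gamma> * int m, \<beta> * binom2 (int m) + \<delta> * int m)" and
    g': "g' = (0, 0, (\<alpha>' + \<beta>') * int m,
      \<alpha>' * binom2 (int m) + \<gamma>' * int m, \<beta>' * binom2 (int m) + \<delta>' * int m)"
    by (meson relator_lattice_memE)
  show "g \<otimes>\<^bsub>FN3\<^esub> g' \<in> relator_lattice m"
    by (simp add: g g')
      (rule relator_lattice_memI[of _ "\<alpha> + \<alpha>'" "\<beta> + \<beta>'" _ _ "\<gamma> + \<gamma>'" _ "\<delta> + \<delta>'"];
        simp add: algebra_simps)
qed auto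

lemma relator_lattice_shift:
  assumes "(0, 0, c, d, e) \<in> relator_lattice m"
  shows "(0, 0, c, d + k * c, e + l * c) \<in> relator_lattice m"
proof -
  from assms obtain \<alpha> \<beta> \<gamma> \<delta> where c: "c = (\<alpha> + \<beta>) * int m"
    and d: "d = \<alpha> * binom2 (int m) + \<gamma> * int m" and e: "e = \<beta> * binom2 (int m) + \<delta> * int m"
    by (elim relator_lattice_memE) (unfold prod.inject, blast)
  show ?thesis
  proof (rule relator_lattice_memI[of _ \<alpha> \<beta> _ _ "\<gamma> + k * (\<alpha> + \<beta>)" _ "\<delta> + l * (\<alpha> + \<beta>)"])
    show "c = (\<alpha> + \<beta>) * int m"
      by (fact c)
    show "d + k * c = \<alpha> * binom2 (int m) + (\<gamma> + k * (\<alpha> + \<beta>)) * int m"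
      unfolding c d by (simp add: algebra_simps)
    show "e + l * c = \<beta> * binom2 (int m) + (\<delta> + l * (\<alpha> + \<beta>)) * int m"
      unfolding c e by (simp add: algebra_simps)
  qed
qed

lemma normalized_relator_lattice:
  "normalized_word_evaluation FN3 (xy_images i j) (relator_lattice m)"
proof (intro normalized_word_evaluation.intro normalized_word_evaluation_axioms.intro
    word_evaluation_FN3 subgroup_relator_lattice)
  fix g k assume g: "g \<in> relator_lattice m"
  then obtain c d e where g_eq: "g = (0, 0, c, d, e)"
    by (elim relator_lattice_memE) blast
  have "(0, 0, c, d + k * c, e + l * c) \<in> relator_lattice m" for k l
    using g by (simp add: g_eq relator_lattice_shift)
  from this[of "-1" 0] this[of 1 0] this[of 0 "-1"] this[of 0 1] g
  show "xy_images i j k \<otimes>\<^bsub>FN3\<^esub> g \<otimes>\<^bsub>FN3\<^esub> inv\<^bsub>FN3\<^esub> xy_images i j k \<in> relator_lattice m"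
    and "inv\<^bsub>FN3\<^esub> xy_images i j k \<otimes>\<^bsub>FN3\<^esub> g \<otimes>\<^bsub>FN3\<^esub> xy_images i j k \<in> relator_lattice m"
    by (simp_all add: g_eq xy_images_def)
qed

lemma relator_lattice_dvd:
  assumes "(0, 0, 0, u + v, - v) \<in> relator_lattice m" and "m \<noteq> 0"
  shows "int m dvd u \<and> int (gcd m (m choose 2)) dvd v"
proof -
  from assms(1) obtain \<alpha> \<beta> \<gamma> \<delta> where c: "0 = (\<alpha> + \<beta>) * int m"
    and d: "u + v = \<alpha> * binom2 (int m) + \<gamma> * int m" and e: "- v = \<beta> * binom2 (int m) + \<delta> * int m"
    by (elim relator_lattice_memE) (unfold prod.inject, blast)
  from c assms(2) have \<beta>: "\<beta> = - \<alpha>"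
    by simp
  have v: "v = \<alpha> * int (m choose 2) - \<delta> * int m"
    using e unfolding \<beta> binom2_of_nat by (simp add: algebra_simps)
  have "u = (\<gamma> + \<delta>) * int m"
    using d unfolding v binom2_of_nat by (simp add: algebra_simps)
  moreover have "int (gcd m (m choose 2)) dvd v"
    unfolding v gcd_int_int_eq[symmetric] by simp
  ultimately show ?thesis
    by simp
qed

lemma eval_w_elem_xy_images_adjacent:
  assumes "1 \<le> i" "i < n - 1"
  shows "eval_word FN3 (xy_images i (Suc i)) (w_elem n a b c d) = (0, 0, 0, b i + c i, - c i)"
proof -
  interpret word_evaluation FN3 "xy_images i (Suc i)"
    by (rule word_evaluation_FN3)
  let ?\<iota> = "\<lambda>p :: int \<times> int. (0, 0, 0, fst p, snd p) :: fn3"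
  have "eval_word FN3 (xy_images i (Suc i)) (w_elem n a b c d) =
    ?\<iota> (sum_list [0. k \<leftarrow> [1..<n], l \<leftarrow> [k+2..<n]]
       + sum_list (map (\<lambda>k. if k = i then (b k, 0) else 0) [1..<n-1])
       + sum_list (map (\<lambda>k. if k = i then (c k, - c k) else 0) [1..<n-1])
       + sum_list (map (\<lambda>_. 0) [1..<n-2]))"
    by (intro eval_w_elem_additive) (auto simp: comm_xy_images int_pow_FN3_derived zero_prod_def)
  then show ?thesis
    using assms by (simp add: sum_list_upt_delta sum_list_concat comp_def del: upt_Suc)
qed

lemma w_elem_comm_subgroup_dvd_b_c:
  assumes "1 \<le> i" "i < n - 1" and "m \<noteq> 0"
    and w: "w_elem n a b c d \<in> comm_subgroup (free_group n) (UT_R n m) (carrier (free_group n))"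
  shows "int m dvd b i \<and> int (gcd m (m choose 2)) dvd c i"
proof -
  interpret normalized_word_evaluation FN3 "xy_images i (Suc i)" "relator_lattice m"
    by (rule normalized_relator_lattice)
  have "(0, 0, int m, binom2 (int m), 0) \<in> relator_lattice m"
    by (rule relator_lattice_memI[of _ 1 0 _ _ 0 _ 0]) simp_all
  moreover have "(0, 0, - int m, 0, - binom2 (int m)) \<in> relator_lattice m"
    by (rule relator_lattice_memI[of _ 0 "-1" _ _ 0 _ 0]) simp_all
  moreover have "(0, 0, 0, 0, 0) \<in> relator_lattice m"
    by (rule relator_lattice_memI[of _ 0 0 _ _ 0 _ 0]) simp_all
  ultimately have "eval_word FN3 (xy_images i (Suc i)) (w_elem n a b c d) \<in> relator_lattice m"
    by (intro eval_UT_comm_subgroup_mem[OF _ _ _ _ _ w])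
      (auto simp: comm_xy_images comm_xy_images_pow)
  then have "(0, 0, 0, b i + c i, - c i) \<in> relator_lattice m"
    by (simp only: eval_w_elem_xy_images_adjacent[OF assms(1,2)])
  then show ?thesis
    using assms(3) by (rule relator_lattice_dvd)
qed

section \<open>Detecting the coefficients \<open>d\<^sub>i\<close>\<close>

type_synonym ut4 = "int \<times> int \<times> int \<times> int \<times> int \<times> int"

text \<open>Unitriangular \<open>4 \<times> 4\<close> integer matrices, in the coordinates
  \<open>(a\<^sub>1\<^sub>2, a\<^sub>2\<^sub>3, a\<^sub>3\<^sub>4, a\<^sub>1\<^sub>3, a\<^sub>2\<^sub>4, a\<^sub>1\<^sub>4)\<close>.\<close>

fun ut4_mult :: "ut4 \<Rightarrow> ut4 \<Rightarrow> ut4" where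
  "ut4_mult (p1, p2, p3, q1, q2, r) (p1', p2', p3', q1', q2', r') =
     (p1 + p1', p2 + p2', p3 + p3', q1 + q1' + p1 * p2', q2 + q2' + p2 * p3',
      r + r' + p1 * q2' + q1 * p3')"

fun ut4_inv :: "ut4 \<Rightarrow> ut4" where
  "ut4_inv (p1, p2, p3, q1, q2, r) =
     (- p1, - p2, - p3, - q1 + p1 * p2, - q2 + p2 * p3, - r + p1 * q2 + q1 * p3 - p1 * p2 * p3)"

fun ut4_cocycle :: "ut4 \<Rightarrow> ut4 \<Rightarrow> int" where
  "ut4_cocycle (a12, a23, a34, a13, a24, a14) (b12, b23, b34, b13, b24, b14) =
     a13 * b24 + a23 * b14 + a23 * a13 * b34 + a12 * b24 + a12 * a23 * b24"

lemma ut4_mult_assoc: "ut4_mult (ut4_mult A B) C = ut4_mult A (ut4_mult B C)"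
  by (cases A; cases B; cases C) (simp add: algebra_simps)

lemma ut4_inv_mult: "ut4_mult (ut4_inv A) A = (0, 0, 0, 0, 0, 0)"
  by (cases A) (simp add: algebra_simps)

lemma ut4_cocycle_parity:
  "odd (ut4_cocycle A B + ut4_cocycle (ut4_mult A B) C) \<longleftrightarrow>
   odd (ut4_cocycle B C + ut4_cocycle A (ut4_mult B C))"
proof -
  obtain a12 a23 a34 a13 a24 a14 where A: "A = (a12, a23, a34, a13, a24, a14)"
    by (cases A) auto
  obtain b12 b23 b34 b13 b24 b14 where B: "B = (b12, b23, b34, b13, b24, b14)"
    by (cases B) auto
  obtain c12 c23 c34 c13 c24 c14 where C: "C = (c12, c23, c34, c13, c24, c14)"
    by (cases C) auto
  have "ut4_cocycle A B + ut4_cocycle (ut4_mult A B) C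
      = ut4_cocycle B C + ut4_cocycle A (ut4_mult B C)
        + a12 * c34 * (b23 * (b23 - 1)) + 2 * (a12 * b23 * c24)"
    unfolding A B C by (simp add: algebra_simps)
  then show ?thesis
    by simp
qed

text \<open>The central extension of \<open>UT\<^sub>4(\<int>)\<close> by \<open>\<int>/2\<close> defined by the cocycle above taken modulo 2.
  In it the lifts of the commuting matrices \<open>E\<^sub>1\<^sub>3\<close> and \<open>E\<^sub>2\<^sub>4\<close> no longer commute.\<close>

fun ut4_ext_mult :: "ut4 \<times> bool \<Rightarrow> ut4 \<times> bool \<Rightarrow> ut4 \<times> bool" where
  "ut4_ext_mult (A, s) (B, t) = (ut4_mult A B, (s \<noteq> t) \<noteq> odd (ut4_cocycle A B))"

fun ut4_ext_inv :: "ut4 \<times> bool \<Rightarrow> ut4 \<times> bool" where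
  "ut4_ext_inv (A, s) = (ut4_inv A, s \<noteq> odd (ut4_cocycle (ut4_inv A) A))"

definition UT4_ext :: "(ut4 \<times> bool) monoid" where
  "UT4_ext = \<lparr>carrier = UNIV, monoid.mult = ut4_ext_mult, one = ((0, 0, 0, 0, 0, 0), False)\<rparr>"

lemma UT4_ext_simps [simp]:
  "x \<otimes>\<^bsub>UT4_ext\<^esub> y = ut4_ext_mult x y" "\<one>\<^bsub>UT4_ext\<^esub> = ((0, 0, 0, 0, 0, 0), False)"
  "carrier UT4_ext = UNIV"
  by (simp_all add: UT4_ext_def)

lemma ut4_ext_mult_assoc: "ut4_ext_mult (ut4_ext_mult x y) z = ut4_ext_mult x (ut4_ext_mult y z)"
proof -
  obtain A s B t C u where "x = (A, s)" "y = (B, t)" "z = (C, u)"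
    by (metis surj_pair)
  then show ?thesis
    using ut4_cocycle_parity[of A B C] by (simp add: ut4_mult_assoc) blast
qed

lemma ut4_ext_inv_mult: "ut4_ext_mult (ut4_ext_inv x) x = ((0, 0, 0, 0, 0, 0), False)"
  by (cases x) (auto simp: ut4_inv_mult)

lemma group_UT4_ext: "group UT4_ext"
proof (rule groupI)
  fix x :: "ut4 \<times> bool"
  show "\<exists>y\<in>carrier UT4_ext. y \<otimes>\<^bsub>UT4_ext\<^esub> x = \<one>\<^bsub>UT4_ext\<^esub>"
    by (rule bexI[of _ "ut4_ext_inv x"]) (simp_all add: ut4_ext_inv_mult)
  show "\<one>\<^bsub>UT4_ext\<^esub> \<otimes>\<^bsub>UT4_ext\<^esub> x = x"
    by (cases x) auto
qed (auto simp: ut4_ext_mult_assoc)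

lemma inv_UT4_ext [simp]: "inv\<^bsub>UT4_ext\<^esub> x = ut4_ext_inv x"
  by (rule group.inv_equality[OF group_UT4_ext]) (simp_all add: ut4_ext_inv_mult)

lemma word_evaluation_UT4_ext: "word_evaluation UT4_ext h"
  by (intro word_evaluation.intro word_evaluation_axioms.intro group_UT4_ext) simp

lemma comm_UT4_ext_central_left [simp]:
  "comm UT4_ext ((0, 0, 0, 0, 0, 0), t) g = ((0, 0, 0, 0, 0, 0), False)"
  by (cases g) (auto simp: comm_def ut4_inv_mult algebra_simps)

lemma comm_UT4_ext_central_right [simp]:
  "comm UT4_ext g ((0, 0, 0, 0, 0, 0), t) = ((0, 0, 0, 0, 0, 0), False)"
  by (cases g) (auto simp: comm_def ut4_inv_mult algebra_simps)

lemma comm_UT4_ext_E13_E24: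
  "comm UT4_ext ((0, 0, 0, 1, 0, 0), False) ((0, 0, 0, 0, 1, 0), False) = ((0, 0, 0, 0, 0, 0), True)"
  by (simp add: comm_def)

lemma nat_pow_UT4_ext_E12:
    "((a, 0, 0, 0, 0, 0), False) [^]\<^bsub>UT4_ext\<^esub> (k::nat) = ((int k * a, 0, 0, 0, 0, 0), False)"
  and nat_pow_UT4_ext_E23:
    "((0, a, 0, 0, 0, 0), False) [^]\<^bsub>UT4_ext\<^esub> (k::nat) = ((0, int k * a, 0, 0, 0, 0), False)"
  and nat_pow_UT4_ext_E34:
    "((0, 0, a, 0, 0, 0), False) [^]\<^bsub>UT4_ext\<^esub> (k::nat) = ((0, 0, int k * a, 0, 0, 0), False)"
  by (induction k) (simp_all add: algebra_simps)

lemma int_pow_UT4_ext_central: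
  "((0, 0, 0, 0, 0, 0), t) [^]\<^bsub>UT4_ext\<^esub> (k::int) = ((0, 0, 0, 0, 0, 0), t \<and> odd k)"
proof (cases t)
  case True
  then show ?thesis
    using group.int_pow_additive[OF group_UT4_ext, of "\<lambda>z. ((0, 0, 0, 0, 0, 0), odd z)" 1 k] by simp
next
  case False
  then show ?thesis
    using group.int_pow_one[OF group_UT4_ext, of k] by simp
qed

definition elementary_images :: "nat \<Rightarrow> nat \<Rightarrow> ut4 \<times> bool" where
  "elementary_images i k =
     (if k = i then ((1, 0, 0, 0, 0, 0), False)
      else if k = Suc i then ((0, 1, 0, 0, 0, 0), False)
      else if k = Suc (Suc i) then ((0, 0, 1, 0, 0, 0), False)
      else ((0, 0, 0, 0, 0, 0), False))"

lemma comm_elementary_images_far: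
  "k + 2 \<le> l \<Longrightarrow>
     comm UT4_ext (elementary_images i k) (elementary_images i l) = ((0, 0, 0, 0, 0, 0), False)"
  by (auto simp: elementary_images_def comm_def)

lemma comm_elementary_images_adjacent:
  "comm UT4_ext (elementary_images i k) (elementary_images i (Suc k)) =
     (if k = i then ((0, 0, 0, 1, 0, 0), False)
      else if k = Suc i then ((0, 0, 0, 0, 1, 0), False)
      else ((0, 0, 0, 0, 0, 0), False))"
  by (auto simp: elementary_images_def comm_def)

lemma comm_elementary_images_left:
  "comm UT4_ext (comm UT4_ext (elementary_images i k) (elementary_images i (Suc k)))
     (elementary_images i k) = ((0, 0, 0, 0, 0, 0), False)"
  by (simp add: comm_elementary_images_adjacent) (auto simp: elementary_images_def comm_def)

lemma comm_elementary_images_right: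
  "comm UT4_ext (comm UT4_ext (elementary_images i k) (elementary_images i (Suc k)))
     (elementary_images i (Suc k)) = ((0, 0, 0, 0, 0, 0), False)"
  by (simp add: comm_elementary_images_adjacent) (auto simp: elementary_images_def comm_def)

lemma comm_elementary_images_mixed:
  "comm UT4_ext (comm UT4_ext (elementary_images i k) (elementary_images i (Suc k)))
     (ut4_ext_mult (elementary_images i k) (ut4_ext_inv (elementary_images i (Suc k))))
   = ((0, 0, 0, 0, 0, 0), False)"
  by (simp add: comm_elementary_images_adjacent) (auto simp: elementary_images_def comm_def)

lemma comm_elementary_images_double:
  "comm UT4_ext (comm UT4_ext (elementary_images i k) (elementary_images i (Suc k)))
     (comm UT4_ext (elementary_images i (Suc k)) (elementary_images i (Suc (Suc k))))
   = ((0, 0, 0, 0, 0, 0), k = i)"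
  by (simp add: comm_elementary_images_adjacent comm_UT4_ext_E13_E24)

definition even_UT4 :: "(ut4 \<times> bool) set" where
  "even_UT4 = {((a12, a23, a34, a13, a24, a14), t).
     even a12 \<and> even a23 \<and> even a34 \<and> even a13 \<and> even a24 \<and> even a14 \<and> \<not> t}"

lemma comm_elementary_images_pow_mem:
  "even (m::nat) \<Longrightarrow>
     comm UT4_ext (elementary_images i k [^]\<^bsub>UT4_ext\<^esub> m) (elementary_images i l) \<in> even_UT4"
  by (auto simp: elementary_images_def even_UT4_def comm_def
      nat_pow_UT4_ext_E12 nat_pow_UT4_ext_E23 nat_pow_UT4_ext_E34)

lemma normalized_even_UT4: "normalized_word_evaluation UT4_ext (elementary_images i) even_UT4"
proof (intro normalized_word_evaluation.intro normalized_word_evaluation_axioms.intro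
    word_evaluation_UT4_ext)
  show "subgroup even_UT4 UT4_ext"
    by (rule group.subgroupI[OF group_UT4_ext]) (auto simp: even_UT4_def)
qed (auto simp: elementary_images_def even_UT4_def)

lemma eval_w_elem_elementary_images:
  assumes "1 \<le> i" "i < n - 2"
  shows "eval_word UT4_ext (elementary_images i) (w_elem n a b c d) = ((0, 0, 0, 0, 0, 0), odd (d i))"
proof -
  interpret word_evaluation UT4_ext "elementary_images i"
    by (rule word_evaluation_UT4_ext)
  let ?\<iota> = "\<lambda>z::int. ((0, 0, 0, 0, 0, 0), odd z)"
  have "eval_word UT4_ext (elementary_images i) (w_elem n a b c d) =
    ?\<iota> (sum_list [0. k \<leftarrow> [1..<n], l \<leftarrow> [k+2..<n]] + sum_list (map (\<lambda>_. 0) [1..<n-1])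
       + sum_list (map (\<lambda>_. 0) [1..<n-1]) + sum_list (map (\<lambda>k. if k = i then d k else 0) [1..<n-2]))"
    by (intro eval_w_elem_additive)
      (simp_all add: comm_elementary_images_far comm_elementary_images_left comm_elementary_images_mixed
        comm_elementary_images_double int_pow_UT4_ext_central)
  then show ?thesis
    using assms by (simp add: sum_list_upt_delta sum_list_concat comp_def del: upt_Suc)
qed

lemma w_elem_comm_subgroup_even_d:
  assumes "1 \<le> i" "i < n - 2" and "even m"
    and w: "w_elem n a b c d \<in> comm_subgroup (free_group n) (UT_R n m) (carrier (free_group n))"
  shows "even (d i)"
proof -
  interpret normalized_word_evaluation UT4_ext "elementary_images i" even_UT4
    by (rule normalized_even_UT4)
  have "eval_word UT4_ext (elementary_images i) (w_elem n a b c d) \<in> even_UT4"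
    using comm_elementary_images_pow_mem[OF \<open>even m\<close>]
    by (intro eval_UT_comm_subgroup_mem[OF _ _ _ _ _ w])
      (simp_all add: comm_elementary_images_far comm_elementary_images_left comm_elementary_images_right
        comm_elementary_images_double even_UT4_def)
  then show ?thesis
    using eval_w_elem_elementary_images[OF assms(1,2)] by (simp add: even_UT4_def)
qed

theorem mainTheorem3:
  fixes n m :: nat and a :: "nat \<Rightarrow> nat \<Rightarrow> int" and b c d :: "nat \<Rightarrow> int"
  assumes "n \<ge> 3" and "m \<ge> 2"
    and "w_elem n a b c d \<in> comm_subgroup (free_group n) (UT_R n m) (carrier (free_group n))"
  shows "(\<forall>i j. 1 \<le> i \<and> i < j - 1 \<and> j - 1 \<le> n - 2 \<longrightarrow> int m dvd a i j)
       \<and> (\<forall>i. 1 \<le> i \<and> i \<le> n - 2 \<longrightarrow> int m dvd b i \<and> int (gcd m (m choose 2)) dvd c i)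
       \<and> (\<forall>i. 1 \<le> i \<and> i \<le> n - 3 \<longrightarrow> int (gcd 2 m) dvd d i)"
proof (intro conjI allI impI)
  fix i j assume "1 \<le> i \<and> i < j - 1 \<and> j - 1 \<le> n - 2"
  then have "1 \<le> i" "i + 2 \<le> j" "j < n"
    using assms(1) by linarith+
  then show "int m dvd a i j"
    using assms(3) by (rule w_elem_comm_subgroup_dvd_a)
next
  fix i assume "1 \<le> i \<and> i \<le> n - 2"
  then have "1 \<le> i" "i < n - 1" "m \<noteq> 0"
    using assms(1,2) by linarith+
  then show "int m dvd b i" "int (gcd m (m choose 2)) dvd c i"
    using assms(3) by (blast dest: w_elem_comm_subgroup_dvd_b_c)+
next
  fix i assume "1 \<le> i \<and> i \<le> n - 3"
  then have i: "1 \<le> i" "i < n - 2"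
    using assms(1) by linarith+
  show "int (gcd 2 m) dvd d i"
  proof (cases "even m")
    case True
    have "even (d i)"
      using i True assms(3) by (rule w_elem_comm_subgroup_even_d)
    then show ?thesis
      using True by (simp add: gcd_nat.absorb1)
  next
    case False
    then have "gcd 2 m = 1"
      by (simp add: coprime_iff_gcd_eq_1[symmetric])
    then show ?thesis
      by simp
  qed
qed

end
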